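(* Fix an integer $k\ge1$ and $p\in(0,1)$. For an integer $K=K(n)\le n-k$ define \[ T^K_{k+1}=\sum_{s\in C_{k+1},\ \min(s)\le K}\prod_{i\ne j\in s}Y_{i,j}\Bigl[\prod_{i=1}^{\min(s)-1}\Bigl(1-\prod_{j\in s}Y_{i,j}\Bigr)-\prod_{i=1}^{\min(s)-1}\Bigl(1-\prod_{j\in s_-}Y_{i,j}\Bigr)\Bigr]. \] If there is $\epsilon>0$ with $K(n)/\ln^{1+\epsilon}(n)\to\infty$ as $n\to\infty$, then $\mathbb{P}(T_{k+1}-T^K_{k+1}\ne0)\to0$ as $n\to\infty$.
   Context: $G(n,p)$ is the random graph on $[n]$ where each of the $\binom n2$ edges is present independently with probability $p$; $Y_{i,j}=Y_{j,i}$ is the indicator of edge $\{i,j\}$. $C_{k+1}$ is the set of $(k+1)$-element subsets of $[n]$, $s_-=s\setminus\{\min s\}$, and \[ T_{k+1}=\sum_{s\in C_{k+1}}\prod_{i\ne j\in s}Y_{i,j}\Bigl[\prod_{i=1}^{\min(s)-1}\Bigl(1-\prod_{j\in s}Y_{i,j}\Bigr)-\prod_{i=1}^{\min(s)-1}\Bigl(1-\prod_{j\in s_-}Y_{i,j}\Bigr)\Bigr], \] which is the number of $k$-simplices of the clique complex $X(n,p)$ of $G$ that are critical for the lexicographical matching (pairing each simplex $s$ having some $j<\min s$ with $s\cup\{j\}$ a simplex to $s\cup\{j_0\}$, $j_0$ the least such $j$). *)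

theory Defs
  imports "HOL-Probability.Probability"
begin

definition edges_Kn :: "nat \<Rightarrow> nat set set" where
  "edges_Kn n = {e. \<exists>i\<in>{1..n}. \<exists>j\<in>{1..n}. i \<noteq> j \<and> e = {i, j}}"

text \<open>The random graph G(n,p): each edge present independently with probability p.
  A graph is represented by its edge-indicator function on 2-element sets.\<close>
definition Gnp :: "nat \<Rightarrow> real \<Rightarrow> (nat set \<Rightarrow> bool) pmf" where
  "Gnp n p = Pi_pmf (edges_Kn n) False (\<lambda>_. bernoulli_pmf p)"

definition Y :: "(nat set \<Rightarrow> bool) \<Rightarrow> nat \<Rightarrow> nat \<Rightarrow> int" where
  "Y G i j = (if G {i, j} then 1 else 0)"

definition C :: "nat \<Rightarrow> nat \<Rightarrow> nat set set" where
  "C n m = {s. s \<subseteq> {1..n} \<and> card s = m}"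

definition crit_term :: "(nat set \<Rightarrow> bool) \<Rightarrow> nat set \<Rightarrow> int" where
  "crit_term G s =
     (\<Prod>i\<in>s. \<Prod>j\<in>s - {i}. Y G i j) *
     ((\<Prod>i\<in>{1..<Min s}. (1 - (\<Prod>j\<in>s. Y G i j)))
      - (\<Prod>i\<in>{1..<Min s}. (1 - (\<Prod>j\<in>s - {Min s}. Y G i j))))"

definition T :: "nat \<Rightarrow> nat \<Rightarrow> (nat set \<Rightarrow> bool) \<Rightarrow> int" where
  "T n k G = (\<Sum>s\<in>C n (k+1). crit_term G s)"

definition TK :: "nat \<Rightarrow> nat \<Rightarrow> int \<Rightarrow> (nat set \<Rightarrow> bool) \<Rightarrow> int" where
  "TK n k K G = (\<Sum>s\<in>{s\<in>C n (k+1). int (Min s) \<le> K}. crit_term G s)"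

end

theory Submission
  imports Defs
begin

text \<open>
  A simplex s can only be critical if no vertex i < min s is adjacent to all of s: such an i
  makes both products over i in the summand vanish. In G(n,p) the edge sets from distinct
  i to s are disjoint, so this has probability (1 - p^(k+1))^(min s - 1). Hence, by a union
  bound over the at most n^(k+1) simplices with min s > K, the probability that T and T^K
  differ is at most n^(k+1) (1 - p^(k+1))^K, which tends to 0 as soon as K / ln n \<rightarrow> \<infinity>.
\<close>

text \<open>Unlike \<open>measure_pmf_prob_product\<close>, no countability of A and B is needed.\<close>

lemma prob_pair_pmf_Times:
  "measure_pmf.prob (pair_pmf M N) (A \<times> B) = measure_pmf.prob M A * measure_pmf.prob N B"
proof -
  have "measure_pmf.prob (pair_pmf M N) (A \<times> B) =
        measure_pmf.prob (pair_pmf M N) ((A \<inter> set_pmf M) \<times> (B \<inter> set_pmf N))"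
    by (rule measure_prob_cong_0) (auto simp: set_pmf_eq pmf_pair)
  also have "\<dots> = measure_pmf.prob M (A \<inter> set_pmf M) * measure_pmf.prob N (B \<inter> set_pmf N)"
    by (rule measure_pmf_prob_product) (auto intro: countable_subset)
  finally show ?thesis
    by (simp add: measure_Int_set_pmf)
qed

lemma prob_Pi_pmf_split:
  assumes "finite E" "A \<subseteq> E"
    and P: "\<And>f g. (\<And>x. x \<in> A \<Longrightarrow> f x = g x) \<Longrightarrow> P f = P g"
    and Q: "\<And>f g. (\<And>x. x \<in> E - A \<Longrightarrow> f x = g x) \<Longrightarrow> Q f = Q g"
  shows "measure_pmf.prob (Pi_pmf E d q) {f. P f \<and> Q f} =
         measure_pmf.prob (Pi_pmf A d q) {f. P f} * measure_pmf.prob (Pi_pmf (E - A) d q) {f. Q f}"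
proof -
  let ?glue = "\<lambda>(f, g) x. if x \<in> A then f x else g x"
  have "finite A"
    using assms(1,2) finite_subset by blast
  have "E = A \<union> (E - A)"
    using assms(2) by blast
  then have "Pi_pmf E d q = map_pmf ?glue (pair_pmf (Pi_pmf A d q) (Pi_pmf (E - A) d q))"
    using Pi_pmf_union[of A "E - A"] assms(1) \<open>finite A\<close> by simp
  moreover have "?glue -` {f. P f \<and> Q f} = {f. P f} \<times> {g. Q g}"
  proof -
    have "P (?glue (f, g)) = P f" "Q (?glue (f, g)) = Q g" for f g
      by (rule P, simp, rule Q, simp)
    then show ?thesis
      by auto
  qed
  ultimately show ?thesis
    by (simp add: prob_pair_pmf_Times)
qed

lemma prob_Pi_bernoulli_all:
  assumes "finite A" "0 \<le> p" "p \<le> 1"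
  shows "measure_pmf.prob (Pi_pmf A False (\<lambda>_. bernoulli_pmf p)) {f. \<forall>x\<in>A. f x} = p ^ card A"
proof -
  have "{f. \<forall>x\<in>A. f x} = Pi A (\<lambda>_. {True})"
    by (auto simp: Pi_def)
  then show ?thesis
    using measure_Pi_pmf_Pi[OF assms(1), of False "\<lambda>_. bernoulli_pmf p" "\<lambda>_. {True}"] assms
    by (simp add: measure_pmf_single)
qed

definition adjacent_to_all :: "('a set \<Rightarrow> bool) \<Rightarrow> 'a \<Rightarrow> 'a set \<Rightarrow> bool" where
  "adjacent_to_all G i s \<longleftrightarrow> (\<forall>j\<in>s. G {i, j})"

lemma prob_none_adjacent_to_all:
  fixes E :: "'a set set"
  assumes "finite I" "finite E" "finite s" "I \<inter> s = {}" "\<forall>i\<in>I. \<forall>j\<in>s. {i, j} \<in> E"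
    and "0 \<le> p" "p \<le> 1"
  shows "measure_pmf.prob (Pi_pmf E False (\<lambda>_. bernoulli_pmf p))
           {G. \<forall>i\<in>I. \<not> adjacent_to_all G i s} = (1 - p ^ card s) ^ card I"
  using assms(1,2,4,5)
proof (induction I arbitrary: E rule: finite_induct)
  case empty
  then show ?case
    by simp
next
  case (insert i I)
  let ?G = "\<lambda>E. Pi_pmf E False (\<lambda>_. bernoulli_pmf p)"
  define star where "star = (\<lambda>j. {i, j}) ` s"
  have "i \<notin> s"
    using insert.prems by auto
  then have "inj_on (\<lambda>j. {i, j}) s"
    by (auto simp: inj_on_def doubleton_eq_iff)
  then have card_star: "card star = card s"
    by (simp add: star_def card_image)
  have star_E: "star \<subseteq> E"
    using insert.prems by (auto simp: star_def)
  have outside_star: "{i', j} \<notin> star" if "i' \<in> I" "j \<in> s" for i' j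
    using that insert.hyps insert.prems by (auto simp: star_def doubleton_eq_iff)
  have "measure_pmf.prob (?G E) {G. \<forall>i'\<in>insert i I. \<not> adjacent_to_all G i' s}
     = measure_pmf.prob (?G E) {G. \<not> adjacent_to_all G i s \<and> (\<forall>i'\<in>I. \<not> adjacent_to_all G i' s)}"
    by simp
  also have "\<dots> = measure_pmf.prob (?G star) {G. \<not> adjacent_to_all G i s} *
       measure_pmf.prob (?G (E - star)) {G. \<forall>i'\<in>I. \<not> adjacent_to_all G i' s}"
  proof (rule prob_Pi_pmf_split[OF insert.prems(1) star_E])
    fix f g :: "'a set \<Rightarrow> bool"
    assume "\<And>x. x \<in> star \<Longrightarrow> f x = g x"
    then show "(\<not> adjacent_to_all f i s) = (\<not> adjacent_to_all g i s)"
      by (auto simp: star_def adjacent_to_all_def)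
  next
    fix f g :: "'a set \<Rightarrow> bool"
    assume "\<And>x. x \<in> E - star \<Longrightarrow> f x = g x"
    then have "f {i', j} = g {i', j}" if "i' \<in> I" "j \<in> s" for i' j
      using outside_star[OF that] insert.prems(3) that by auto
    then show "(\<forall>i'\<in>I. \<not> adjacent_to_all f i' s) = (\<forall>i'\<in>I. \<not> adjacent_to_all g i' s)"
      by (auto simp: adjacent_to_all_def)
  qed
  also have "measure_pmf.prob (?G (E - star)) {G. \<forall>i'\<in>I. \<not> adjacent_to_all G i' s}
      = (1 - p ^ card s) ^ card I"
    by (rule insert.IH) (use insert.prems outside_star in auto)
  also have "{G. \<not> adjacent_to_all G i s} = UNIV - {G. \<forall>x\<in>star. G x}"
    by (auto simp: star_def adjacent_to_all_def)
  also have "measure_pmf.prob (?G star) (UNIV - {G. \<forall>x\<in>star. G x})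
      = 1 - measure_pmf.prob (?G star) {G. \<forall>x\<in>star. G x}"
    using measure_pmf.prob_compl[of "{G. \<forall>x\<in>star. G x}"] by simp
  also have "measure_pmf.prob (?G star) {G. \<forall>x\<in>star. G x} = p ^ card s"
    using prob_Pi_bernoulli_all[of star p] assms card_star by (simp add: star_def)
  finally show ?case
    using insert.hyps by simp
qed

lemma tendsto_over_ln_of_tendsto_over_ln_powr:
  fixes K :: "nat \<Rightarrow> real"
  assumes "\<epsilon> > 0" "filterlim (\<lambda>n. K n / ln (real n) powr (1 + \<epsilon>)) at_top sequentially"
  shows "filterlim (\<lambda>n. K n / ln (real n)) at_top sequentially"
proof (rule filterlim_at_top_mono[OF assms(2)])
  have "eventually (\<lambda>n. K n / ln (real n) powr (1 + \<epsilon>) \<ge> 0) sequentially"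
    using assms(2) by (simp add: filterlim_at_top)
  moreover have "eventually (\<lambda>n::nat. real n \<ge> exp 1) sequentially"
    using filterlim_real_sequentially by (simp add: filterlim_at_top)
  ultimately show "eventually (\<lambda>n. K n / ln (real n) powr (1 + \<epsilon>) \<le> K n / ln (real n)) sequentially"
  proof eventually_elim
    case (elim n)
    then have ln_ge_1: "ln (real n) \<ge> 1"
      by (metis exp_gt_zero ln_exp ln_le_cancel_iff order_less_le_trans)
    then have "ln (real n) \<le> ln (real n) powr (1 + \<epsilon>)"
      using powr_mono[of 1 "1 + \<epsilon>" "ln (real n)"] assms(1) by simp
    moreover have "K n \<ge> 0"
      using elim(1) ln_ge_1 by (simp add: zero_le_divide_iff)
    ultimately show ?case
      using ln_ge_1 by (simp add: frac_le)
  qed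
qed

lemma power_mult_geometric_tendsto_0:
  fixes K :: "nat \<Rightarrow> int" and r :: real
  assumes "0 < r" "r < 1" "filterlim (\<lambda>n. real_of_int (K n) / ln (real n)) at_top sequentially"
  shows "(\<lambda>n. real n ^ m * r ^ nat (K n)) \<longlonglongrightarrow> 0"
proof (rule tendsto_sandwich[OF _ _ tendsto_const tendsto_inverse_0_at_top[OF filterlim_real_sequentially]])
  define a where "a = - ln r"
  have "a > 0"
    using assms(1,2) by (simp add: a_def)
  have "eventually (\<lambda>n. real_of_int (K n) / ln (real n) \<ge> (m + 1) / a) sequentially"
    using assms(3) by (simp add: filterlim_at_top)
  moreover have "eventually (\<lambda>n::nat. real n \<ge> exp 1) sequentially"
    using filterlim_real_sequentially by (simp add: filterlim_at_top)
  ultimately show "eventually (\<lambda>n. real n ^ m * r ^ nat (K n) \<le> inverse (real n)) sequentially"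
  proof eventually_elim
    case (elim n)
    define L where "L = ln (real n)"
    have "real n > 0"
      using elim(2) by (meson exp_gt_zero order_less_le_trans)
    then have n_eq: "real n = exp L"
      by (simp add: L_def)
    have "L \<ge> 1"
      using elim(2) unfolding n_eq by simp
    then have aK: "(m + 1) * L \<le> a * real_of_int (K n)"
      using elim(1) \<open>a > 0\<close> by (simp add: L_def field_simps)
    moreover have "1 \<le> (m + 1) * L"
      using \<open>L \<ge> 1\<close> mult_mono[of 1 "real m + 1" 1 L] by (simp add: add.commute)
    ultimately have "0 < a * real_of_int (K n)"
      by linarith
    then have "K n \<ge> 0"
      using \<open>a > 0\<close> zero_less_mult_pos by fastforce
    have "real n ^ m * r ^ nat (K n) = exp L ^ m * exp (ln r) ^ nat (K n)"
      using n_eq assms(1) by simp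
    also have "\<dots> = exp (real m * L - a * real_of_int (K n))"
      using \<open>K n \<ge> 0\<close> by (simp add: a_def exp_add mult.commute flip: exp_of_nat_mult)
    also have "\<dots> \<le> exp (- L)"
      using aK by (simp add: algebra_simps)
    also have "\<dots> = inverse (real n)"
      by (simp add: n_eq exp_minus)
    finally show ?case .
  qed
qed (use assms(1) in simp)

lemma finite_C: "finite (C n m)"
  by (rule finite_subset[of _ "Pow {1..n}"]) (auto simp: C_def)

lemma card_C_le: "card (C n m) \<le> n ^ m"
proof -
  have "card (C n m) = n choose m"
    unfolding C_def using n_subsets[of "{1..n}" m] by simp
  also have "\<dots> \<le> n ^ m"
    by (cases "m \<le> n") (simp_all add: binomial_le_pow binomial_eq_0)
  finally show ?thesis .
qed

lemma finite_edges_Kn: "finite (edges_Kn n)"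
  by (rule finite_subset[of _ "Pow {1..n}"]) (auto simp: edges_Kn_def)

lemma crit_term_eq_0_if_adjacent_to_all:
  assumes "i \<in> {1..<Min s}" "adjacent_to_all G i s"
  shows "crit_term G s = 0"
proof -
  have "(\<Prod>j\<in>s. Y G i j) = 1" "(\<Prod>j\<in>s - {Min s}. Y G i j) = 1"
    using assms(2) by (simp_all add: Y_def adjacent_to_all_def)
  then have "(\<Prod>i\<in>{1..<Min s}. 1 - (\<Prod>j\<in>s. Y G i j)) = 0"
        "(\<Prod>i\<in>{1..<Min s}. 1 - (\<Prod>j\<in>s - {Min s}. Y G i j)) = 0"
    using assms(1) by (metis (no_types, lifting) diff_self finite_atLeastLessThan prod_zero)+
  then show ?thesis
    unfolding crit_term_def by (simp only: diff_self mult_zero_right)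
qed

lemma prob_none_below_Min_adjacent_to_all:
  assumes "s \<subseteq> {1..n}" "s \<noteq> {}" "0 \<le> p" "p \<le> 1"
  shows "measure_pmf.prob (Gnp n p) {G. \<forall>i\<in>{1..<Min s}. \<not> adjacent_to_all G i s}
           = (1 - p ^ card s) ^ (Min s - 1)"
proof -
  have "finite s"
    using assms(1) finite_subset by blast
  then have Min_le: "Min s \<le> j" if "j \<in> s" for j
    using that by simp
  have "{1..<Min s} \<inter> s = {}"
    using Min_le by fastforce
  moreover have "{i, j} \<in> edges_Kn n" if "i \<in> {1..<Min s}" "j \<in> s" for i j
  proof -
    have "j \<in> {1..n}" "i \<noteq> j" "Min s \<le> j"
      using that Min_le[of j] assms(1) by auto
    then have "i \<in> {1..n}"
      using that(1) by simp
    with \<open>j \<in> {1..n}\<close> \<open>i \<noteq> j\<close> show ?thesis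
      unfolding edges_Kn_def by blast
  qed
  ultimately show ?thesis
    unfolding Gnp_def
    using prob_none_adjacent_to_all[OF _ finite_edges_Kn \<open>finite s\<close>] assms(3,4) by simp
qed

lemma T_minus_TK:
  "T n k G - TK n k K G = (\<Sum>s\<in>{s\<in>C n (k+1). K < int (Min s)}. crit_term G s)"
proof -
  have "T n k G = (\<Sum>s\<in>{s\<in>C n (k+1). int (Min s) \<le> K}. crit_term G s) +
                  (\<Sum>s\<in>{s\<in>C n (k+1). K < int (Min s)}. crit_term G s)"
    unfolding T_def
    by (subst sum.union_disjoint[symmetric]) (auto simp: finite_C intro!: sum.cong)
  then show ?thesis
    by (simp add: TK_def)
qed

lemma prob_T_ne_TK_le:
  assumes "0 < p" "p < 1"
  shows "measure_pmf.prob (Gnp n p) {G. T n k G - TK n k K G \<noteq> 0}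
           \<le> real n ^ (k+1) * (1 - p ^ (k+1)) ^ nat K"
proof -
  define S where "S = {s\<in>C n (k+1). K < int (Min s)}"
  define avoided where "avoided s = {G. \<forall>i\<in>{1..<Min s}. \<not> adjacent_to_all G i s}" for s :: "nat set"
  have "finite S"
    using finite_C by (simp add: S_def)
  have "{G. T n k G - TK n k K G \<noteq> 0} \<subseteq> (\<Union>s\<in>S. avoided s)"
  proof
    fix G
    assume "G \<in> {G. T n k G - TK n k K G \<noteq> 0}"
    then obtain s where "s \<in> S" "crit_term G s \<noteq> 0"
      unfolding T_minus_TK S_def by (auto elim: sum.not_neutral_contains_not_neutral)
    then show "G \<in> (\<Union>s\<in>S. avoided s)"
      using crit_term_eq_0_if_adjacent_to_all[of _ s G] unfolding avoided_def by blast
  qed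
  then have "measure_pmf.prob (Gnp n p) {G. T n k G - TK n k K G \<noteq> 0}
      \<le> measure_pmf.prob (Gnp n p) (\<Union>s\<in>S. avoided s)"
    by (rule measure_pmf.finite_measure_mono) simp
  also have "\<dots> \<le> (\<Sum>s\<in>S. measure_pmf.prob (Gnp n p) (avoided s))"
    by (rule measure_pmf.finite_measure_subadditive_finite[OF \<open>finite S\<close>]) simp
  also have "\<dots> \<le> (\<Sum>s\<in>S. (1 - p ^ (k+1)) ^ nat K)"
  proof (rule sum_mono)
    fix s assume "s \<in> S"
    then have s: "s \<subseteq> {1..n}" "card s = k + 1" "nat K \<le> Min s - 1"
      by (auto simp: S_def C_def)
    then have "s \<noteq> {}"
      by auto
    then have "measure_pmf.prob (Gnp n p) (avoided s) = (1 - p ^ (k+1)) ^ (Min s - 1)"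
      using prob_none_below_Min_adjacent_to_all[OF s(1)] s(2) assms by (simp add: avoided_def)
    also have "\<dots> \<le> (1 - p ^ (k+1)) ^ nat K"
      using s(3) assms power_le_one[of p "k+1"] by (intro power_decreasing) simp_all
    finally show "measure_pmf.prob (Gnp n p) (avoided s) \<le> (1 - p ^ (k+1)) ^ nat K" .
  qed
  also have "\<dots> = real (card S) * (1 - p ^ (k+1)) ^ nat K"
    by simp
  also have "\<dots> \<le> real n ^ (k+1) * (1 - p ^ (k+1)) ^ nat K"
  proof (rule mult_right_mono)
    have "card S \<le> card (C n (k+1))"
      by (rule card_mono[OF finite_C]) (simp add: S_def)
    then show "real (card S) \<le> real n ^ (k+1)"
      using card_C_le[of n "k+1"] by (metis of_nat_le_iff of_nat_power order_trans)
    show "0 \<le> (1 - p ^ (k+1)) ^ nat K"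
      using assms power_le_one[of p "k+1"] by simp
  qed
  finally show ?thesis .
qed

theorem proposition4p5:
  fixes k :: nat and p :: real and K :: "nat \<Rightarrow> int"
  assumes "k \<ge> 1" and "0 < p" and "p < 1"
    and "\<And>n. K n \<le> int n - int k"
    and "\<exists>\<epsilon>>0. filterlim (\<lambda>n. real_of_int (K n) / (ln (real n)) powr (1 + \<epsilon>)) at_top sequentially"
  shows "(\<lambda>n. measure_pmf.prob (Gnp n p) {G. T n k G - TK n k (K n) G \<noteq> 0}) \<longlonglongrightarrow> 0"
proof (rule tendsto_sandwich[OF _ _ tendsto_const])
  obtain \<epsilon> where "\<epsilon> > 0"
    and "filterlim (\<lambda>n. real_of_int (K n) / (ln (real n)) powr (1 + \<epsilon>)) at_top sequentially"
    using assms(5) by blast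
  then have "filterlim (\<lambda>n. real_of_int (K n) / ln (real n)) at_top sequentially"
    by (rule tendsto_over_ln_of_tendsto_over_ln_powr)
  moreover have "0 < 1 - p ^ (k+1)" "1 - p ^ (k+1) < 1"
    using assms(2,3) power_strict_mono[of p 1 "k+1"] by auto
  ultimately show "(\<lambda>n. real n ^ (k+1) * (1 - p ^ (k+1)) ^ nat (K n)) \<longlonglongrightarrow> 0"
    using power_mult_geometric_tendsto_0 by blast
  show "eventually (\<lambda>n. measure_pmf.prob (Gnp n p) {G. T n k G - TK n k (K n) G \<noteq> 0}
      \<le> real n ^ (k+1) * (1 - p ^ (k+1)) ^ nat (K n)) sequentially"
    using prob_T_ne_TK_le[OF assms(2,3)] by simp
qed simp

end
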